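(* Let $n,k$ be integers with $1\le k\le n-2$ and let $c_0,\dots,c_{n-1}$ be real constants. For an ordered bid vector $b_1\ge\dots\ge b_n\ge 0$ define $r_i=c_0+c_1b_1+\dots+c_{i-1}b_{i-1}+c_ib_{i+1}+\dots+c_{n-1}b_n$ for $i=1,\dots,n$. If $r_n\ge 0$ for every ordered bid vector, then the corresponding TFRM is individually rational for users (IR$_u$): under truthful bidding, every included user has nonnegative utility for every ordered bid vector.
   Context: TFRM: the block includes $n$ transactions with bids ordered $b_1\ge\dots\ge b_n$ (truthful, $b_i=\theta_i$ the valuation); users $1,\dots,k$ are confirmed and each pays $b_{k+1}-r_i$; users $j\in\{k+1,\dots,n\}$ are included but unconfirmed and pay $-r_j$. User utility is $u_i=\mathbb{1}[i\text{ confirmed}]\,\theta_i-p_i$. *)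

theory Defs
  imports Complex_Main
begin

text \<open>Bid vectors are functions nat => real, used on indices 1..n.\<close>
definition ordered_bids :: "nat \<Rightarrow> (nat \<Rightarrow> real) \<Rightarrow> bool" where
  "ordered_bids n b \<longleftrightarrow>
     (\<forall>i j. 1 \<le> i \<longrightarrow> i \<le> j \<longrightarrow> j \<le> n \<longrightarrow> b j \<le> b i) \<and> (\<forall>i\<in>{1..n}. 0 \<le> b i)"

definition rfee :: "(nat \<Rightarrow> real) \<Rightarrow> nat \<Rightarrow> (nat \<Rightarrow> real) \<Rightarrow> nat \<Rightarrow> real" where
  "rfee c n b i = c 0 + (\<Sum>j\<in>{1..<i}. c j * b j) + (\<Sum>j\<in>{i..<n}. c j * b (Suc j))"

definition tfrm_payment :: "(nat \<Rightarrow> real) \<Rightarrow> nat \<Rightarrow> nat \<Rightarrow> (nat \<Rightarrow> real) \<Rightarrow> nat \<Rightarrow> real" where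
  "tfrm_payment c n k b i = (if i \<le> k then b (k + 1) - rfee c n b i else - rfee c n b i)"

definition tfrm_utility ::
  "(nat \<Rightarrow> real) \<Rightarrow> nat \<Rightarrow> nat \<Rightarrow> (nat \<Rightarrow> real) \<Rightarrow> (nat \<Rightarrow> real) \<Rightarrow> nat \<Rightarrow> real" where
  "tfrm_utility c n k \<theta> b i = (if i \<le> k then \<theta> i else 0) - tfrm_payment c n k b i"

definition IR_u :: "(nat \<Rightarrow> real) \<Rightarrow> nat \<Rightarrow> nat \<Rightarrow> bool" where
  "IR_u c n k \<longleftrightarrow>
     (\<forall>b. ordered_bids n b \<longrightarrow> (\<forall>i\<in>{1..n}. 0 \<le> tfrm_utility c n k b b i))"

end

theory Submission
  imports Defs
begin

text \<open>Deleting the bid of user i from b_1 >= ... >= b_n and appending a zero bid gives again an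
  ordered bid vector b', and r_i(b) = r_n(b'). Hence r_n >= 0 on all ordered bid vectors forces
  r_i >= 0 for every i. A confirmed user i <= k has utility b_i - b_{k+1} + r_i >= r_i, since
  b_i >= b_{k+1}; an unconfirmed one has utility r_i.\<close>

definition remove_bid :: "nat \<Rightarrow> nat \<Rightarrow> (nat \<Rightarrow> real) \<Rightarrow> nat \<Rightarrow> real" where
  "remove_bid i n b j = (if j < i then b j else if j < n then b (Suc j) else 0)"

lemma ordered_bids_remove_bid:
  assumes "ordered_bids n b"
  shows "ordered_bids n (remove_bid i n b)"
proof -
  have mono: "\<And>x y. 1 \<le> x \<Longrightarrow> x \<le> y \<Longrightarrow> y \<le> n \<Longrightarrow> b y \<le> b x"
    and nonneg: "\<And>x. 1 \<le> x \<Longrightarrow> x \<le> n \<Longrightarrow> 0 \<le> b x"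
    using assms unfolding ordered_bids_def by auto
  show ?thesis
    unfolding ordered_bids_def
  proof (intro conjI allI impI ballI)
    fix x y assume "1 \<le> x" "x \<le> y" "y \<le> n"
    then show "remove_bid i n b y \<le> remove_bid i n b x"
      using mono[of x y] mono[of x "Suc y"] mono[of "Suc x" "Suc y"] nonneg[of x] nonneg[of "Suc x"]
      unfolding remove_bid_def by auto
  next
    fix x assume "x \<in> {1..n}"
    then show "0 \<le> remove_bid i n b x"
      using nonneg[of x] nonneg[of "Suc x"] unfolding remove_bid_def by auto
  qed
qed

lemma rfee_eq_rfee_last_remove_bid:
  assumes "1 \<le> i" and "i \<le> n"
  shows "rfee c n b i = rfee c n (remove_bid i n b) n"
proof -
  let ?b' = "remove_bid i n b"
  have "(\<Sum>j\<in>{1..<n}. c j * ?b' j) = (\<Sum>j\<in>{1..<i}. c j * ?b' j) + (\<Sum>j\<in>{i..<n}. c j * ?b' j)"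
    using assms by (simp add: sum.atLeastLessThan_concat)
  also have "\<dots> = (\<Sum>j\<in>{1..<i}. c j * b j) + (\<Sum>j\<in>{i..<n}. c j * b (Suc j))"
    by (intro arg_cong2[where f = "(+)"] sum.cong) (auto simp: remove_bid_def)
  finally show ?thesis
    unfolding rfee_def by simp
qed

lemma rfee_nonneg_if_last_nonneg:
  assumes "\<forall>b. ordered_bids n b \<longrightarrow> 0 \<le> rfee c n b n"
    and "ordered_bids n b" and "1 \<le> i" and "i \<le> n"
  shows "0 \<le> rfee c n b i"
  using assms ordered_bids_remove_bid rfee_eq_rfee_last_remove_bid by metis

lemma tfrm_utility_truthful_ge_rfee:
  assumes "ordered_bids n b" and "1 \<le> i" and "k < n"
  shows "rfee c n b i \<le> tfrm_utility c n k b b i"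
proof -
  have "i \<le> k \<Longrightarrow> b (k + 1) \<le> b i"
    using assms unfolding ordered_bids_def by auto
  then show ?thesis
    unfolding tfrm_utility_def tfrm_payment_def by auto
qed

theorem claim1:
  fixes n k :: nat and c :: "nat \<Rightarrow> real"
  assumes "1 \<le> k" and "k + 2 \<le> n"
    and "\<forall>b. ordered_bids n b \<longrightarrow> 0 \<le> rfee c n b n"
  shows "IR_u c n k"
  unfolding IR_u_def
proof (intro allI impI ballI)
  fix b i assume b: "ordered_bids n b" and i: "i \<in> {1..n}"
  have "0 \<le> rfee c n b i"
    using rfee_nonneg_if_last_nonneg[OF assms(3) b] i by auto
  also have "\<dots> \<le> tfrm_utility c n k b b i"
    using tfrm_utility_truthful_ge_rfee[OF b] i assms(2) by auto
  finally show "0 \<le> tfrm_utility c n k b b i" .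
qed

end
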